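(* Let $\{N_i(t_i),t_i\ge0\}$, $i=1,\dots,d$, be independent simple counting processes, $\mathcal{F}^{(i)}(t_i)=\sigma(N_i(s_i),s_i\le t_i)$, and $\mathcal{F}(\mathbf{t})=\bigvee_{i=1}^d\mathcal{F}^{(i)}(t_i)$ for $\mathbf{t}=(t_1,\dots,t_d)\in\mathbb{R}^d_+$. For $\boldsymbol{\Lambda}=(\lambda_1,\dots,\lambda_d)$ with all $\lambda_i>0$, let $Y(\mathbf{t})=\sum_{i=1}^dN_i(t_i)\ln(u)-\boldsymbol{\Lambda}\cdot\mathbf{t}\,(u-1)$, $0<u\le1$. Then $\{\exp(Y(\mathbf{t})),\mathbf{t}\in\mathbb{R}^d_+\}$ is a multiparameter martingale with respect to $\{\mathcal{F}(\mathbf{t})\}$ (for every $u\in(0,1]$) if and only if $\{\sum_{i=1}^dN_i(t_i),\mathbf{t}\in\mathbb{R}^d_+\}$ is a multiparameter Poisson process with transition parameter $\boldsymbol{\Lambda}$.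
   Context: $\boldsymbol{\Lambda}\cdot\mathbf{t}=\sum_i\lambda_it_i$; $\preceq$ is the componentwise order, $\prec$ the strict relation. A simple counting process is a nonnegative-integer-valued, nondecreasing process starting at 0 with jumps of size 1. A multiparameter Poisson process with transition parameter $\boldsymbol{\Lambda}$ is a nonnegative-integer-valued random field on $\mathbb{R}^d_+$, 0 at $\mathbf{0}$, nondecreasing in $\preceq$, with independent increments along chains $\mathbf{0}=\mathbf{t}^{(0)}\prec\dots\prec\mathbf{t}^{(m)}$, stationary increments, and $\mathcal{N}(\mathbf{t})\sim$ Poisson$(\boldsymbol{\Lambda}\cdot\mathbf{t})$. A multiparameter martingale w.r.t. a filtration increasing in $\preceq$ is an integrable adapted process with $\mathbb{E}(M(\mathbf{t})\mid\mathcal{F}(\mathbf{s}))=M(\mathbf{s})$ a.s. for $\mathbf{s}\preceq\mathbf{t}$. *)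

theory Defs
  imports "HOL-Probability.Probability" "HOL-Library.Function_Algebras"
begin

text \<open>Points of R^d_+ are functions t :: 'd \<Rightarrow> real with 0 \<le> t (pointwise order);
  the componentwise order is the pointwise order on functions, and the strict
  relation is the induced strict order (s \<le> t and s \<noteq> t).\<close>

definition dotp :: "('d::finite \<Rightarrow> real) \<Rightarrow> ('d \<Rightarrow> real) \<Rightarrow> real" where
  "dotp \<Lambda> t = (\<Sum>i\<in>UNIV. \<Lambda> i * t i)"

definition simple_counting_process :: "'a measure \<Rightarrow> (real \<Rightarrow> 'a \<Rightarrow> nat) \<Rightarrow> bool" where
  "simple_counting_process M N \<longleftrightarrow>
     (\<forall>\<omega>\<in>space M.
        N 0 \<omega> = 0 \<and>
        (\<forall>s t. 0 \<le> s \<and> s \<le> t \<longrightarrow> N s \<omega> \<le> N t \<omega>) \<and>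
        (\<forall>t\<ge>0. \<exists>s>t. N s \<omega> = N t \<omega>) \<and>
        (\<forall>t>0. \<exists>s. 0 \<le> s \<and> s < t \<and> N t \<omega> \<le> N s \<omega> + 1))"

definition proc_sigma :: "'a measure \<Rightarrow> (real \<Rightarrow> 'a \<Rightarrow> nat) \<Rightarrow> real set \<Rightarrow> 'a set set" where
  "proc_sigma M N S = sigma_sets (space M) {N s -` A \<inter> space M | s A. s \<in> S}"

definition mp_filtration ::
  "'a measure \<Rightarrow> ('d \<Rightarrow> real \<Rightarrow> 'a \<Rightarrow> nat) \<Rightarrow> ('d \<Rightarrow> real) \<Rightarrow> 'a measure" where
  "mp_filtration M N t =
     sigma (space M) (\<Union>i. {N i s -` A \<inter> space M | s A. 0 \<le> s \<and> s \<le> t i})"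

definition mp_martingale ::
  "'a measure \<Rightarrow> (('d \<Rightarrow> real) \<Rightarrow> 'a measure) \<Rightarrow> (('d \<Rightarrow> real) \<Rightarrow> 'a \<Rightarrow> real) \<Rightarrow> bool" where
  "mp_martingale M F X \<longleftrightarrow>
     (\<forall>t. 0 \<le> t \<longrightarrow> integrable M (X t) \<and> X t \<in> borel_measurable (F t)) \<and>
     (\<forall>s t. 0 \<le> s \<and> s \<le> t \<longrightarrow>
        (AE \<omega> in M. real_cond_exp M (F s) (X t) \<omega> = X s \<omega>))"

definition mp_poisson_process ::
  "'a measure \<Rightarrow> ('d::finite \<Rightarrow> real) \<Rightarrow> (('d \<Rightarrow> real) \<Rightarrow> 'a \<Rightarrow> nat) \<Rightarrow> bool" where
  "mp_poisson_process M \<Lambda> X \<longleftrightarrow>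
     (\<forall>t. 0 \<le> t \<longrightarrow> X t \<in> measurable M (count_space UNIV)) \<and>
     (\<forall>\<omega>\<in>space M. X 0 \<omega> = 0) \<and>
     (\<forall>\<omega>\<in>space M. \<forall>s t. 0 \<le> s \<and> s \<le> t \<longrightarrow> X s \<omega> \<le> X t \<omega>) \<and>
     (\<forall>m (c :: nat \<Rightarrow> 'd \<Rightarrow> real). c 0 = 0 \<and> (\<forall>k<m. c k < c (Suc k)) \<longrightarrow>
        prob_space.indep_vars M (\<lambda>_. count_space UNIV)
          (\<lambda>k \<omega>. X (c (Suc k)) \<omega> - X (c k) \<omega>) {..<m}) \<and>
     (\<forall>s t. 0 \<le> s \<and> s \<le> t \<longrightarrow>
        distr M (count_space UNIV) (\<lambda>\<omega>. X t \<omega> - X s \<omega>) =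
        distr M (count_space UNIV) (X (t - s))) \<and>
     (\<forall>t. 0 \<le> t \<longrightarrow> (\<forall>k::nat.
        measure M {\<omega>\<in>space M. X t \<omega> = k} =
          exp (- dotp \<Lambda> t) * dotp \<Lambda> t ^ k / fact k))"

end

theory Submission
  imports Defs
begin

text \<open>
  Write \<open>X(t) = \<Sum>\<^sub>i N\<^sub>i(t\<^sub>i)\<close> and, for \<open>s \<le> t\<close>, \<open>a = \<Lambda>\<cdot>(t - s)\<close>. Both sides of the
  equivalence amount to: for all \<open>s \<le> t\<close> the increment \<open>X(t) - X(s)\<close> is independent of
  \<open>F(s)\<close> and Poisson distributed with mean \<open>a\<close>.

  Since \<open>exp Y(t) = exp Y(s) \<cdot> u\<^bsup>X(t) - X(s)\<^esup> \<cdot> e\<^bsup>-a(u-1)\<^esup>\<close>, this condition gives the martingale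
  property through \<open>E u\<^bsup>X(t)-X(s)\<^esup> = e\<^bsup>a(u-1)\<^esup>\<close>. Conversely, on an event \<open>B \<in> F(s)\<close> on which
  \<open>X(s)\<close> is constant, the martingale property says that \<open>\<integral>\<^sub>B u\<^bsup>X(t)-X(s)\<^esup> = e\<^bsup>a(u-1)\<^esup> P(B)\<close> for all
  \<open>u \<in> (0,1]\<close>; comparing the coefficients of these power series in \<open>u\<close> gives
  \<open>P(B \<inter> {X(t) - X(s) = k}) = P(B) e\<^bsup>-a\<^esup> a\<^sup>k / k!\<close>, and summing over the values of \<open>X(s)\<close>
  extends this to all of \<open>F(s)\<close>.

  The condition yields a multiparameter Poisson process: along a chain every increment is
  independent of the past \<open>\<sigma>\<close>-algebra, which contains all earlier increments. Conversely,
  on the \<open>i\<close>-th axis a multiparameter Poisson process is \<open>N\<^sub>i\<close> itself, so the past of \<open>N\<^sub>i\<close> up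
  to \<open>s\<^sub>i\<close> is independent of \<open>N\<^sub>i(t\<^sub>i) - N\<^sub>i(s\<^sub>i)\<close>; the independence of the \<open>N\<^sub>i\<close> combines these
  into the independence of \<open>F(s)\<close> and \<open>\<Sum>\<^sub>i (N\<^sub>i(t\<^sub>i) - N\<^sub>i(s\<^sub>i)) = X(t) - X(s)\<close>.
\<close>

section \<open>Count-valued random variables\<close>

lemma measurable_count_space_combine:
  fixes f :: "'a \<Rightarrow> 'b::countable" and g :: "'a \<Rightarrow> 'c::countable"
  assumes "f \<in> measurable M (count_space UNIV)" and "g \<in> measurable M (count_space UNIV)"
  shows "(\<lambda>\<omega>. h (f \<omega>) (g \<omega>)) \<in> measurable M (count_space UNIV)"
proof -
  have "(\<lambda>\<omega>. (\<lambda>x \<omega>. h x (g \<omega>)) (f \<omega>) \<omega>) \<in> measurable M (count_space UNIV)"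
    by (rule measurable_compose_countable[OF _ assms(1)], rule measurable_compose[OF assms(2)]) simp
  then show ?thesis by simp
qed

lemma measurable_count_space_sum:
  fixes f :: "'i \<Rightarrow> 'a \<Rightarrow> nat"
  assumes "finite I" and "\<And>i. i \<in> I \<Longrightarrow> f i \<in> measurable M (count_space UNIV)"
  shows "(\<lambda>\<omega>. \<Sum>i\<in>I. f i \<omega>) \<in> measurable M (count_space UNIV)"
  using assms by (induction I rule: finite_induct)
    (auto intro: measurable_count_space_combine[where h="(+)"])

lemma vimage_sum_in_sigma_sets:
  fixes Y :: "'i \<Rightarrow> 'a \<Rightarrow> nat"
  assumes "finite K" and f: "\<And>\<omega>. \<omega> \<in> \<Omega> \<Longrightarrow> f \<omega> = (\<Sum>k\<in>K. Y k \<omega>)"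
  shows "f -` C \<inter> \<Omega> \<in> sigma_sets \<Omega> (\<Union>k\<in>K. {Y k -` B \<inter> \<Omega> | B. True})"
proof -
  let ?G = "\<Union>k\<in>K. {Y k -` B \<inter> \<Omega> | B. True}"
  have "?G \<subseteq> Pow \<Omega>" by auto
  then have space: "space (sigma \<Omega> ?G) = \<Omega>" and sets: "sets (sigma \<Omega> ?G) = sigma_sets \<Omega> ?G"
    by (simp_all add: space_measure_of sets_measure_of)
  have "Y k \<in> measurable (sigma \<Omega> ?G) (count_space UNIV)" if "k \<in> K" for k
    unfolding measurable_count_space_eq2_countable space sets using that
    by (auto intro!: sigma_sets.Basic)
  then have "(\<lambda>\<omega>. \<Sum>k\<in>K. Y k \<omega>) \<in> measurable (sigma \<Omega> ?G) (count_space UNIV)"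
    by (intro measurable_count_space_sum assms(1))
  moreover have "f \<in> measurable (sigma \<Omega> ?G) (count_space UNIV) \<longleftrightarrow>
      (\<lambda>\<omega>. \<Sum>k\<in>K. Y k \<omega>) \<in> measurable (sigma \<Omega> ?G) (count_space UNIV)"
    by (rule measurable_cong) (simp only: space f)
  ultimately have "f \<in> measurable (sigma \<Omega> ?G) (count_space UNIV)" by simp
  from measurable_sets[OF this, of C] show ?thesis by (simp only: space sets sets_count_space UNIV_I Pow_UNIV)
qed

lemma Int_stable_vimage: "Int_stable {f -` B \<inter> \<Omega> | B. True}"
proof (rule Int_stableI)
  fix a b assume "a \<in> {f -` B \<inter> \<Omega> | B. True}" "b \<in> {f -` B \<inter> \<Omega> | B. True}"
  then obtain A B where "a = f -` A \<inter> \<Omega>" "b = f -` B \<inter> \<Omega>" by blast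
  then have "a \<inter> b = f -` (A \<inter> B) \<inter> \<Omega>" by auto
  then show "a \<inter> b \<in> {f -` B \<inter> \<Omega> | B. True}" by blast
qed

lemma Int_stable_sigma_sets: "A \<subseteq> Pow \<Omega> \<Longrightarrow> Int_stable (sigma_sets \<Omega> A)"
  using algebra.Int_stable sigma_algebra.axioms(1) sigma_algebra_sigma_sets by blast

section \<open>Power series and the Poisson distribution\<close>

lemma powser_coeffs_unique:
  fixes a b :: "nat \<Rightarrow> real"
  assumes "\<And>x. \<bar>x\<bar> < 1 \<Longrightarrow> summable (\<lambda>k. a k * x ^ k)"
    and "\<And>x. \<bar>x\<bar> < 1 \<Longrightarrow> summable (\<lambda>k. b k * x ^ k)"
    and eq: "\<And>x. 0 < x \<Longrightarrow> x < 1 \<Longrightarrow> (\<Sum>k. a k * x ^ k) = (\<Sum>k. b k * x ^ k)"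
  shows "a = b"
proof -
  define c where "c k = a k - b k" for k
  define S where "S x = (\<Sum>k. a k * x ^ k) - (\<Sum>k. b k * x ^ k)" for x :: real
  have c_sums: "(\<lambda>k. c k * x ^ k) sums S x" if "\<bar>x\<bar> < 1" for x
    using sums_diff[OF assms(1,2)[OF that, THEN summable_sums]]
    by (simp add: c_def S_def algebra_simps)
  have "c n = 0" for n
  proof (induction n rule: less_induct)
    case (less n)
    define g where "g x = S x / x ^ n" for x :: real
    have "(\<lambda>k. c (k + n) * x ^ k) sums g x" if "x \<noteq> 0" "norm x < 1" for x :: real
    proof -
      have "(\<lambda>k. c (k + n) * x ^ (k + n)) sums S x"
        using c_sums[of x] that less sums_iff_shift[of "\<lambda>k. c k * x ^ k" n] by simp
      then have "(\<lambda>k. c (k + n) * x ^ (k + n) / x ^ n) sums (S x / x ^ n)"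
        by (rule sums_divide)
      then show ?thesis using that by (simp add: g_def power_add)
    qed
    then have "(g \<longlongrightarrow> c (0 + n)) (at 0)"
      by (intro powser_limit_0_strong[of 1]) auto
    then have "(g \<longlongrightarrow> c n) (at_right 0)"
      using tendsto_mono[OF at_le[of "{0<..}" UNIV]] by simp
    moreover have "eventually (\<lambda>x. g x = 0) (at_right (0::real))"
      unfolding eventually_at_right[OF zero_less_one]
      using eq by (auto simp: g_def S_def intro!: exI[of _ 1])
    then have "(g \<longlongrightarrow> 0) (at_right 0)"
      by (simp add: tendsto_eventually)
    ultimately show ?case
      by (rule tendsto_unique[rotated]) simp
  qed
  then show ?thesis by (auto simp: c_def fun_eq_iff)
qed

definition poisson_density :: "real \<Rightarrow> nat \<Rightarrow> real" where
  "poisson_density a k = exp (- a) * a ^ k / fact k"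

lemma poisson_density_powser_sums:
  "(\<lambda>k. poisson_density a k * x ^ k) sums exp (a * (x - 1))"
proof -
  have "(\<lambda>k. exp (- a) * ((a * x) ^ k /\<^sub>R fact k)) sums (exp (- a) * exp (a * x))"
    by (intro sums_mult exp_converges)
  moreover have "exp (- a) * exp (a * x) = exp (a * (x - 1))"
    by (simp add: exp_add[symmetric] algebra_simps)
  ultimately show ?thesis
    by (simp add: poisson_density_def power_mult_distrib divide_inverse ac_simps)
qed

lemma (in prob_space) indicator_power_integral_sums:
  fixes D :: "'a \<Rightarrow> nat"
  assumes D: "D \<in> measurable M (count_space UNIV)" and B: "B \<in> events"
    and u: "0 \<le> u" "u \<le> 1"
  shows "(\<lambda>k. prob (B \<inter> D -` {k}) * u ^ k) sums (\<integral>x. indicator B x * u ^ D x \<partial>M)"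
proof -
  define A where "A k = B \<inter> D -` {k}" for k
  have A: "A k \<in> events" for k
  proof -
    have "A k = B \<inter> (D -` {k} \<inter> space M)"
      using sets.sets_into_space[OF B] by (auto simp: A_def)
    then show ?thesis using B measurable_sets[OF D, of "{k}"] by auto
  qed
  define f where "f k = (\<lambda>x. u ^ k * indicator (A k) x)" for k
  have integral_f: "integral\<^sup>L M (f k) = prob (A k) * u ^ k" for k
    using A by (simp add: f_def mult.commute)
  have f_single: "f k x = (if k = D x then indicator B x * u ^ D x else 0)" for k x
    by (auto simp: f_def A_def split: split_indicator)
  have f_sums: "(\<lambda>k. f k x) sums (indicator B x * u ^ D x)" for x
    using sums_single[of "D x" "\<lambda>_. indicator B x * u ^ D x"] by (simp add: f_single)
  have "(\<lambda>k. prob (A k)) sums prob (\<Union>k. A k)"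
    by (rule finite_measure_UNION) (use A in \<open>auto simp: disjoint_family_on_def A_def\<close>)
  then have "summable (\<lambda>k. prob (A k))"
    by (rule sums_summable)
  moreover have "(\<integral>x. norm (f k x) \<partial>M) = prob (A k) * u ^ k" for k
    using u integral_f by (simp add: f_def abs_mult)
  ultimately have "summable (\<lambda>k. (\<integral>x. norm (f k x) \<partial>M))"
    using u by (auto intro!: summable_comparison_test[of _ "\<lambda>k. prob (A k)"] exI[of _ 0]
        simp: abs_mult mult_left_le power_le_one)
  moreover have "integrable M (f k)" for k
    using A by (auto simp: f_def emeasure_eq_measure intro!: integrable_real_indicator)
  moreover have "summable (\<lambda>k. norm (f k x))" for x
    by (rule summable_finite[of "{D x}"]) (simp_all add: f_single)
  ultimately have "(\<lambda>k. integral\<^sup>L M (f k)) sums (\<integral>x. (\<Sum>k. f k x) \<partial>M)"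
    by (intro sums_integral) auto
  then show ?thesis
    using f_sums by (simp add: integral_f sums_iff A_def)
qed

lemma (in prob_space) integral_power_poisson:
  fixes D :: "'a \<Rightarrow> nat"
  assumes D: "D \<in> measurable M (count_space UNIV)"
    and distr: "\<And>k. prob (D -` {k} \<inter> space M) = poisson_density a k"
    and u: "0 \<le> u" "u \<le> 1"
  shows "(\<integral>x. u ^ D x \<partial>M) = exp (a * (u - 1))"
proof -
  have "(\<lambda>k. prob (space M \<inter> D -` {k}) * u ^ k) sums (\<integral>x. indicator (space M) x * u ^ D x \<partial>M)"
    using D u by (intro indicator_power_integral_sums) auto
  moreover have "space M \<inter> D -` {k} = D -` {k} \<inter> space M" for k
    by blast
  moreover have "(\<integral>x. indicator (space M) x * u ^ D x \<partial>M) = (\<integral>x. u ^ D x \<partial>M)"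
    by (intro Bochner_Integration.integral_cong) auto
  ultimately have "(\<lambda>k. poisson_density a k * u ^ k) sums (\<integral>x. u ^ D x \<partial>M)"
    by (simp add: distr)
  then show ?thesis
    using poisson_density_powser_sums sums_unique2 by blast
qed

section \<open>Independence and conditional expectation\<close>

lemma (in sigma_finite_subalgebra) set_integral_eq_if_real_cond_exp_eq:
  assumes f: "integrable M f" and g: "g \<in> borel_measurable M"
    and cond_exp: "AE x in M. real_cond_exp M F f x = g x" and A: "A \<in> sets F"
  shows "(\<integral>x\<in>A. f x \<partial>M) = (\<integral>x\<in>A. g x \<partial>M)"
proof -
  have A_M: "A \<in> sets M"
    using A subalg by (auto simp: subalgebra_def)
  have "(\<integral>x\<in>A. f x \<partial>M) = (\<integral>x\<in>A. real_cond_exp M F f x \<partial>M)"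
    using f A by (rule real_cond_exp_intA)
  also have "\<dots> = (\<integral>x\<in>A. g x \<partial>M)"
    unfolding set_lebesgue_integral_def
  proof (rule integral_cong_AE)
    show "(\<lambda>x. indicator A x *\<^sub>R real_cond_exp M F f x) \<in> borel_measurable M"
      using A_M by (intro borel_measurable_scaleR borel_measurable_indicator borel_measurable_cond_exp2)
    show "(\<lambda>x. indicator A x *\<^sub>R g x) \<in> borel_measurable M"
      using A_M g by (intro borel_measurable_scaleR borel_measurable_indicator)
    show "AE x in M. indicator A x *\<^sub>R real_cond_exp M F f x = indicator A x *\<^sub>R g x"
      using cond_exp by eventually_elim simp
  qed
  finally show ?thesis .
qed

lemma (in prob_space) indep_set_mono:
  assumes "indep_set A B" and "A' \<subseteq> A" and "B' \<subseteq> B"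
  shows "indep_set A' B'"
  using assms by (simp add: indep_sets2_eq subset_iff)

lemma (in prob_space) indep_vars_cong_space:
  assumes "\<And>i \<omega>. i \<in> I \<Longrightarrow> \<omega> \<in> space M \<Longrightarrow> X i \<omega> = Y i \<omega>"
  shows "indep_vars N X I \<longleftrightarrow> indep_vars N Y I"
proof -
  have "X i \<in> measurable M (N i) \<longleftrightarrow> Y i \<in> measurable M (N i)" if "i \<in> I" for i
    using assms[OF that] by (intro measurable_cong) simp
  moreover have "X i -` B \<inter> space M = Y i -` B \<inter> space M" if "i \<in> I" for i B
    using assms[OF that] by auto
  ultimately show ?thesis
    unfolding indep_vars_def2 by (auto cong: indep_sets_cong)
qed

lemma (in prob_space) indep_set_sigma_vimage_nat:
  fixes D :: "'a \<Rightarrow> nat"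
  assumes S: "S \<subseteq> events" "Int_stable S" and D: "D \<in> measurable M (count_space UNIV)"
    and eq: "\<And>A k. A \<in> S \<Longrightarrow> prob (A \<inter> D -` {k}) = prob A * prob (D -` {k} \<inter> space M)"
  shows "indep_set (sigma_sets (space M) S) (sigma_sets (space M) {D -` B \<inter> space M | B. True})"
proof -
  let ?T = "insert {} {D -` {k} \<inter> space M | k. True}"
  have "indep_set S ?T"
  proof (rule indep_setI)
    fix A T assume "A \<in> S" "T \<in> ?T"
    moreover have "A \<inter> (D -` {k} \<inter> space M) = A \<inter> D -` {k}" if "A \<in> S" for A k
      using that S(1) sets.sets_into_space by blast
    ultimately show "prob (A \<inter> T) = prob A * prob T"
      using eq by auto
  qed (use S(1) measurable_sets[OF D] in auto)
  then have "indep_set (sigma_sets (space M) S) (sigma_sets (space M) ?T)"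
    by (rule indep_set_sigma_sets[OF _ S(2)]) (rule Int_stableI, auto)
  moreover have "sigma_sets (space M) {D -` B \<inter> space M | B. True} \<subseteq> sigma_sets (space M) ?T"
  proof (rule sigma_sets_mono, safe)
    fix B :: "nat set"
    have "D -` B \<inter> space M = (\<Union>k. if k \<in> B then D -` {k} \<inter> space M else {})"
      by auto
    also have "\<dots> \<in> sigma_sets (space M) ?T"
      by (intro sigma_sets.Union) (auto intro: sigma_sets.Basic)
    finally show "D -` B \<inter> space M \<in> sigma_sets (space M) ?T" .
  qed
  ultimately show ?thesis
    by (rule indep_set_mono[OF _ order_refl])
qed

lemma (in prob_space) integral_mult_indep_vimage:
  fixes g :: "'a \<Rightarrow> real" and h :: "'b \<Rightarrow> real"
  assumes indep: "indep_set (sets G) (sigma_sets (space M) {D -` B \<inter> space M | B. True})"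
    and space_G: "space G = space M"
    and g: "g \<in> borel_measurable G" "integrable M g" and h: "integrable M (\<lambda>x. h (D x))"
  shows "(\<integral>x. g x * h (D x) \<partial>M) = (\<integral>x. g x \<partial>M) * (\<integral>x. h (D x) \<partial>M)"
proof -
  have "indep_var borel g borel (\<lambda>x. h (D x))"
    unfolding indep_var_eq
  proof (intro conjI)
    show "random_variable borel g" "random_variable borel (\<lambda>x. h (D x))"
      using g(2) h by (simp_all add: borel_measurable_integrable)
    have "{g -` B \<inter> space M | B. B \<in> sets borel} \<subseteq> sets G"
      unfolding space_G[symmetric] using measurable_sets[OF g(1)] by blast
    then have "sigma_sets (space M) {g -` B \<inter> space M | B. B \<in> sets borel} \<subseteq> sets G"
      using sets.sigma_sets_subset[of _ G] by (simp only: space_G)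
    moreover have "sigma_sets (space M) {(\<lambda>x. h (D x)) -` B \<inter> space M | B. B \<in> sets borel}
        \<subseteq> sigma_sets (space M) {D -` B \<inter> space M | B. True}"
    proof (rule sigma_sets_subseteq, safe)
      fix B :: "real set"
      have "(\<lambda>x. h (D x)) -` B \<inter> space M = D -` (h -` B) \<inter> space M"
        by auto
      then show "\<exists>C. (\<lambda>x. h (D x)) -` B \<inter> space M = D -` C \<inter> space M \<and> True"
        by (intro exI[of _ "h -` B"]) simp
    qed
    ultimately show "indep_set (sigma_sets (space M) {g -` B \<inter> space M | B. B \<in> sets borel})
        (sigma_sets (space M) {(\<lambda>x. h (D x)) -` B \<inter> space M | B. B \<in> sets borel})"
      by (rule indep_set_mono[OF indep])
  qed
  then show ?thesis
    using g(2) h by (rule indep_var_lebesgue_integral)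
qed

lemma (in prob_space) prob_Int_eq_mult_by_fibres:
  fixes Y :: "'a \<Rightarrow> nat"
  assumes Y: "Y \<in> measurable M (count_space UNIV)" and A: "A \<in> events" and E: "E \<in> events"
    and fibre: "\<And>j. prob (A \<inter> Y -` {j} \<inter> E) = prob (A \<inter> Y -` {j}) * p"
  shows "prob (A \<inter> E) = prob A * p"
proof -
  have fibre_events: "A \<inter> Y -` {j} \<in> events" for j
  proof -
    have "A \<inter> Y -` {j} = A \<inter> (Y -` {j} \<inter> space M)"
      using sets.sets_into_space[OF A] by blast
    then show ?thesis using A measurable_sets[OF Y, of "{j}"] by auto
  qed
  have "(\<lambda>j. prob (A \<inter> Y -` {j})) sums prob (\<Union>j. A \<inter> Y -` {j})"
    by (rule finite_measure_UNION) (auto simp: fibre_events disjoint_family_on_def)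
  also have "(\<Union>j. A \<inter> Y -` {j}) = A"
    by auto
  finally have total: "(\<lambda>j. prob (A \<inter> Y -` {j}) * p) sums (prob A * p)"
    by (rule sums_mult2)
  have "(\<lambda>j. prob (A \<inter> Y -` {j} \<inter> E)) sums prob (\<Union>j. A \<inter> Y -` {j} \<inter> E)"
    by (rule finite_measure_UNION) (auto simp: fibre_events E disjoint_family_on_def)
  also have "(\<Union>j. A \<inter> Y -` {j} \<inter> E) = A \<inter> E"
    by auto
  finally have "(\<lambda>j. prob (A \<inter> Y -` {j}) * p) sums prob (A \<inter> E)"
    by (simp add: fibre)
  with total show ?thesis
    by (rule sums_unique2[symmetric])
qed

lemma (in prob_space) prob_Inter_eq_prod_if_indep_of_past:
  fixes G :: "nat \<Rightarrow> 'a measure" and Y :: "nat \<Rightarrow> 'a \<Rightarrow> 'b"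
  assumes space_G: "\<And>k. space (G k) = space M"
    and G_mono: "\<And>k. k < m \<Longrightarrow> sets (G k) \<subseteq> sets (G (Suc k))"
    and Y_meas: "\<And>k. k < m \<Longrightarrow> Y k \<in> measurable (G (Suc k)) (N k)"
    and Y_indep: "\<And>k. k < m \<Longrightarrow> indep_set (sets (G k)) {Y k -` B \<inter> space M | B. B \<in> sets (N k)}"
    and "n \<le> m" "J \<subseteq> {..<n}" "\<forall>j\<in>J. A j \<in> {Y j -` B \<inter> space M | B. B \<in> sets (N j)}"
  shows "space M \<inter> (\<Inter>j\<in>J. A j) \<in> sets (G n) \<and> prob (space M \<inter> (\<Inter>j\<in>J. A j)) = (\<Prod>j\<in>J. prob (A j))"
  using assms(5-7)
proof (induction n arbitrary: J)
  case 0
  then show ?case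
    using sets.top[of "G 0"] by (simp add: space_G prob_space)
next
  case (Suc n)
  let ?E = "space M \<inter> (\<Inter>j\<in>J - {n}. A j)"
  have "J - {n} \<subseteq> {..<n}"
    using Suc.prems(2) by auto
  then have E: "?E \<in> sets (G n)" "prob ?E = (\<Prod>j\<in>J - {n}. prob (A j))"
    using Suc.IH[OF Suc_leD[OF Suc.prems(1)]] Suc.prems(3) by auto
  have G_n: "sets (G n) \<subseteq> sets (G (Suc n))"
    using Suc.prems by (intro G_mono) simp
  show ?case
  proof (cases "n \<in> J")
    case False
    then have "J - {n} = J" by blast
    then show ?thesis using E G_n by auto
  next
    case True
    have A_n: "A n \<in> sets (G (Suc n))"
      using Suc.prems True measurable_sets[OF Y_meas[of n]] by (auto simp: space_G)
    have split: "space M \<inter> (\<Inter>j\<in>J. A j) = ?E \<inter> A n"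
      using True by blast
    have "prob (?E \<inter> A n) = prob ?E * prob (A n)"
      using Suc.prems True E(1) by (intro indep_setD[OF Y_indep]) auto
    moreover have "(\<Prod>j\<in>J. prob (A j)) = prob (A n) * (\<Prod>j\<in>J - {n}. prob (A j))"
      using True Suc.prems(2) by (intro prod.remove) (auto intro: finite_subset)
    ultimately show ?thesis
      using split E G_n A_n by (auto simp: mult.commute)
  qed
qed

lemma (in prob_space) indep_vars_if_indep_of_past:
  fixes G :: "nat \<Rightarrow> 'a measure" and Y :: "nat \<Rightarrow> 'a \<Rightarrow> 'b"
  assumes space_G: "\<And>k. space (G k) = space M"
    and G_mono: "\<And>k. k < m \<Longrightarrow> sets (G k) \<subseteq> sets (G (Suc k))"
    and Y_meas: "\<And>k. k < m \<Longrightarrow> Y k \<in> measurable (G (Suc k)) (N k)"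
    and Y_indep: "\<And>k. k < m \<Longrightarrow> indep_set (sets (G k)) {Y k -` B \<inter> space M | B. B \<in> sets (N k)}"
  shows "indep_vars N Y {..<m}"
proof -
  let ?\<sigma> = "\<lambda>k. {Y k -` B \<inter> space M | B. B \<in> sets (N k)}"
  have \<sigma>_events: "?\<sigma> k \<subseteq> events" if "k < m" for k
    using Y_indep[OF that] by (rule indep_setD_ev2)
  have "indep_sets ?\<sigma> {..<m}"
  proof (rule indep_setsI)
    show "?\<sigma> k \<subseteq> events" if "k \<in> {..<m}" for k
      using \<sigma>_events that by simp
  next
    fix A J assume J: "J \<noteq> {}" "J \<subseteq> {..<m}" and A: "\<forall>j\<in>J. A j \<in> ?\<sigma> j"
    then have "(\<Inter>j\<in>J. A j) = space M \<inter> (\<Inter>j\<in>J. A j)"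
      by blast
    then show "prob (\<Inter>j\<in>J. A j) = (\<Prod>j\<in>J. prob (A j))"
      using prob_Inter_eq_prod_if_indep_of_past[OF assms order_refl J(2) A] by simp
  qed
  moreover have "random_variable (N k) (Y k)" if "k < m" for k
  proof (rule measurableI)
    show "Y k x \<in> space (N k)" if "x \<in> space M" for x
      using measurable_space[OF Y_meas[OF \<open>k < m\<close>]] that by (simp add: space_G)
    show "Y k -` B \<inter> space M \<in> events" if "B \<in> sets (N k)" for B
      using \<sigma>_events[OF \<open>k < m\<close>] that by blast
  qed
  ultimately show ?thesis
    unfolding indep_vars_def2 by simp
qed

lemma (in prob_space) indep_set_collect_two:
  assumes indep: "indep_sets E (I \<union> J)" and disjoint: "I \<inter> J = {}"
    and stable: "\<And>i. i \<in> I \<union> J \<Longrightarrow> Int_stable (E i)"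
  shows "indep_set (sigma_sets (space M) (\<Union>i\<in>I. E i)) (sigma_sets (space M) (\<Union>j\<in>J. E j))"
proof -
  let ?K = "\<lambda>b. if b then I else J"
  have "indep_sets E (\<Union>b. ?K b)"
    using indep by (simp add: UNIV_bool Un_commute)
  then have "indep_sets (\<lambda>b. sigma_sets (space M) (\<Union>i\<in>?K b. E i)) UNIV"
    by (rule indep_sets_collect_sigma)
      (use disjoint stable in \<open>auto simp: disjoint_family_on_def split: if_splits\<close>)
  then show ?thesis
    unfolding indep_set_def by (rule indep_sets_cong[THEN iffD1, rotated 2]) (auto split: bool.split)
qed

lemma Int_stable_UN_finite_sigma_sets:
  assumes "\<And>r. r \<in> I \<Longrightarrow> A r \<subseteq> Pow \<Omega>"
  shows "Int_stable (\<Union>R\<in>{R. finite R \<and> R \<subseteq> I}. sigma_sets \<Omega> (\<Union>r\<in>R. A r))"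
proof (rule Int_stableI)
  fix a b assume "a \<in> (\<Union>R\<in>{R. finite R \<and> R \<subseteq> I}. sigma_sets \<Omega> (\<Union>r\<in>R. A r))"
    "b \<in> (\<Union>R\<in>{R. finite R \<and> R \<subseteq> I}. sigma_sets \<Omega> (\<Union>r\<in>R. A r))"
  then obtain R S where R: "finite R" "R \<subseteq> I" "a \<in> sigma_sets \<Omega> (\<Union>r\<in>R. A r)"
    and S: "finite S" "S \<subseteq> I" "b \<in> sigma_sets \<Omega> (\<Union>r\<in>S. A r)"
    by blast
  have "sigma_sets \<Omega> (\<Union>r\<in>R. A r) \<union> sigma_sets \<Omega> (\<Union>r\<in>S. A r) \<subseteq> sigma_sets \<Omega> (\<Union>r\<in>R \<union> S. A r)"
    by (intro Un_least sigma_sets_subseteq) auto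
  moreover have "Int_stable (sigma_sets \<Omega> (\<Union>r\<in>R \<union> S. A r))"
    using R(2) S(2) assms by (intro Int_stable_sigma_sets) blast
  ultimately have "a \<inter> b \<in> sigma_sets \<Omega> (\<Union>r\<in>R \<union> S. A r)"
    using R(3) S(3) unfolding Int_stable_def by blast
  then show "a \<inter> b \<in> (\<Union>R\<in>{R. finite R \<and> R \<subseteq> I}. sigma_sets \<Omega> (\<Union>r\<in>R. A r))"
    using R S by blast
qed

lemma (in prob_space) indep_set_sigma_UN_if_finite:
  assumes finite_indep: "\<And>R. finite R \<Longrightarrow> R \<subseteq> I \<Longrightarrow> indep_set (sigma_sets (space M) (\<Union>r\<in>R. A r)) B"
    and A: "\<And>r. r \<in> I \<Longrightarrow> A r \<subseteq> Pow (space M)" and B: "Int_stable B"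
  shows "indep_set (sigma_sets (space M) (\<Union>r\<in>I. A r)) B"
proof -
  define \<pi> where "\<pi> = (\<Union>R\<in>{R. finite R \<and> R \<subseteq> I}. sigma_sets (space M) (\<Union>r\<in>R. A r))"
  have "indep_set \<pi> B"
  proof (rule indep_setI)
    show "\<pi> \<subseteq> events"
      unfolding \<pi>_def by (auto dest!: finite_indep indep_setD_ev1)
    show "B \<subseteq> events"
      using finite_indep[of "{}"] by (simp add: indep_setD_ev2)
    fix a b assume "a \<in> \<pi>" "b \<in> B"
    then show "prob (a \<inter> b) = prob a * prob b"
      unfolding \<pi>_def by (auto dest!: finite_indep intro: indep_setD)
  qed
  then have "indep_set (sigma_sets (space M) \<pi>) (sigma_sets (space M) B)"
    unfolding \<pi>_def using A B by (intro indep_set_sigma_sets Int_stable_UN_finite_sigma_sets)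
  moreover have "sigma_sets (space M) \<pi> = sigma_sets (space M) (\<Union>r\<in>I. A r)"
  proof (rule sigma_sets_eqI)
    fix a assume "a \<in> \<pi>"
    then obtain R where "R \<subseteq> I" "a \<in> sigma_sets (space M) (\<Union>r\<in>R. A r)"
      unfolding \<pi>_def by blast
    moreover have "sigma_sets (space M) (\<Union>r\<in>R. A r) \<subseteq> sigma_sets (space M) (\<Union>r\<in>I. A r)"
      if "R \<subseteq> I" for R
      using that by (intro sigma_sets_subseteq) blast
    ultimately show "a \<in> sigma_sets (space M) (\<Union>r\<in>I. A r)"
      by blast
  next
    fix a assume "a \<in> (\<Union>r\<in>I. A r)"
    then obtain r where "r \<in> I" "a \<in> A r" by blast
    then have "a \<in> \<pi>"
      unfolding \<pi>_def by (intro UN_I[of "{r}"]) auto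
    then show "a \<in> sigma_sets (space M) \<pi>" ..
  qed
  ultimately have "indep_set (sigma_sets (space M) (\<Union>r\<in>I. A r)) (sigma_sets (space M) B)"
    by simp
  then show ?thesis
    by (rule indep_set_mono) (auto intro: sigma_sets_superset_generator)
qed

definition Inter_choices :: "('i \<Rightarrow> 'a set set) \<Rightarrow> 'a set set" where
  "Inter_choices C = {\<Inter>i. c i | c. \<forall>i. c i \<in> C i}"

lemma Int_stable_Inter_choices:
  assumes "\<And>i. Int_stable (C i)"
  shows "Int_stable (Inter_choices C)"
proof (rule Int_stableI)
  fix a b assume "a \<in> Inter_choices C" "b \<in> Inter_choices C"
  then obtain \<alpha> \<beta> where \<alpha>: "\<And>i. \<alpha> i \<in> C i" "a = (\<Inter>i. \<alpha> i)"
    and \<beta>: "\<And>i. \<beta> i \<in> C i" "b = (\<Inter>i. \<beta> i)"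
    unfolding Inter_choices_def by blast
  have "a \<inter> b = (\<Inter>i. \<alpha> i \<inter> \<beta> i)"
    using \<alpha>(2) \<beta>(2) by blast
  moreover have "\<alpha> i \<inter> \<beta> i \<in> C i" for i
    by (rule Int_stableD[OF assms \<alpha>(1) \<beta>(1)])
  ultimately show "a \<inter> b \<in> Inter_choices C"
    unfolding Inter_choices_def by blast
qed

lemma sigma_sets_Inter_choices:
  fixes C :: "'i::finite \<Rightarrow> 'a set set"
  assumes C: "\<And>i. C i \<subseteq> Pow \<Omega>" "\<And>i. \<Omega> \<in> C i"
  shows "sigma_sets \<Omega> (Inter_choices C) = sigma_sets \<Omega> (\<Union>i. C i)"
proof (rule sigma_sets_eqI)
  interpret S: sigma_algebra \<Omega> "sigma_sets \<Omega> (\<Union>i. C i)"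
    using C(1) by (intro sigma_algebra_sigma_sets) blast
  fix a assume "a \<in> Inter_choices C"
  then obtain c where "\<And>i. c i \<in> C i" "a = (\<Inter>i. c i)"
    unfolding Inter_choices_def by blast
  then show "a \<in> sigma_sets \<Omega> (\<Union>i. C i)"
    by (simp only:) (intro S.finite_INT; auto intro: sigma_sets.Basic)
next
  fix a assume "a \<in> (\<Union>i. C i)"
  then obtain i where i: "a \<in> C i" by blast
  moreover have "a \<subseteq> \<Omega>"
    using i C(1) by blast
  then have "a = (\<Inter>j. if j = i then a else \<Omega>)"
    by (auto split: if_split_asm)
  then have "a \<in> Inter_choices C"
    unfolding Inter_choices_def using i C(2)
    by (intro CollectI exI[of _ "\<lambda>j. if j = i then a else \<Omega>"]) auto
  then show "a \<in> sigma_sets \<Omega> (Inter_choices C)" ..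
qed

lemma (in prob_space) indep_set_Inter_choices:
  fixes A B G :: "'i::finite \<Rightarrow> 'a set set"
  assumes indep: "indep_sets G UNIV" and G: "\<And>i. sigma_algebra (space M) (G i)"
    and AB_G: "\<And>i. A i \<subseteq> G i" "\<And>i. B i \<subseteq> G i" and AB: "\<And>i. indep_set (A i) (B i)"
  shows "indep_set (Inter_choices A) (Inter_choices B)"
proof -
  have G_events: "G i \<subseteq> events" for i
    using indep by (simp add: indep_sets_def)
  have prob_Inter: "prob (\<Inter>i. c i) = (\<Prod>i\<in>UNIV. prob (c i))" if "\<And>i. c i \<in> G i" for c
    using that by (intro indep_setsD[OF indep]) auto
  have choices_events: "Inter_choices C \<subseteq> events" if "\<And>i. C i \<subseteq> G i" for C
  proof
    fix a assume "a \<in> Inter_choices C"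
    then obtain c where c: "\<And>i. c i \<in> C i" "a = (\<Inter>i. c i)"
      unfolding Inter_choices_def by blast
    have "c i \<in> events" for i
      using c(1) that G_events by blast
    then show "a \<in> events"
      unfolding c(2) by (intro sets.finite_INT) auto
  qed
  show ?thesis
  proof (rule indep_setI)
    fix a b assume "a \<in> Inter_choices A" "b \<in> Inter_choices B"
    then obtain \<alpha> \<beta> where \<alpha>: "\<And>i. \<alpha> i \<in> A i" "a = (\<Inter>i. \<alpha> i)"
      and \<beta>: "\<And>i. \<beta> i \<in> B i" "b = (\<Inter>i. \<beta> i)"
      unfolding Inter_choices_def by blast
    have \<alpha>\<beta>_G: "\<alpha> i \<in> G i" "\<beta> i \<in> G i" "\<alpha> i \<inter> \<beta> i \<in> G i" for i
    proof -
      interpret sigma_algebra "space M" "G i" by (rule G)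
      show "\<alpha> i \<in> G i" "\<beta> i \<in> G i" "\<alpha> i \<inter> \<beta> i \<in> G i"
        using \<alpha>(1) \<beta>(1) AB_G by blast+
    qed
    have "a \<inter> b = (\<Inter>i. \<alpha> i \<inter> \<beta> i)"
      using \<alpha>(2) \<beta>(2) by blast
    then have "prob (a \<inter> b) = (\<Prod>i\<in>UNIV. prob (\<alpha> i \<inter> \<beta> i))"
      by (simp add: prob_Inter \<alpha>\<beta>_G)
    also have "\<dots> = (\<Prod>i\<in>UNIV. prob (\<alpha> i) * prob (\<beta> i))"
      using \<alpha>(1) \<beta>(1) by (intro prod.cong refl indep_setD[OF AB])
    also have "\<dots> = prob a * prob b"
      by (simp add: \<alpha>(2) \<beta>(2) prob_Inter \<alpha>\<beta>_G prod.distrib)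
    finally show "prob (a \<inter> b) = prob a * prob b" .
  qed (use choices_events AB_G in auto)
qed

lemma (in prob_space) indep_set_sigma_UN_components:
  fixes A B G :: "'i::finite \<Rightarrow> 'a set set"
  assumes indep: "indep_sets G UNIV" and G: "\<And>i. sigma_algebra (space M) (G i)"
    and AB_G: "\<And>i. A i \<subseteq> G i" "\<And>i. B i \<subseteq> G i" and AB: "\<And>i. indep_set (A i) (B i)"
    and A: "\<And>i. Int_stable (A i)" "\<And>i. space M \<in> A i"
    and B: "\<And>i. Int_stable (B i)" "\<And>i. space M \<in> B i"
  shows "indep_set (sigma_sets (space M) (\<Union>i. A i)) (sigma_sets (space M) (\<Union>i. B i))"
proof -
  have "indep_set (sigma_sets (space M) (Inter_choices A)) (sigma_sets (space M) (Inter_choices B))"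
    using A(1) B(1)
    by (intro indep_set_sigma_sets Int_stable_Inter_choices indep_set_Inter_choices[OF indep G AB_G AB])
  moreover have "G i \<subseteq> Pow (space M)" for i
    using indep sets.sets_into_space by (auto simp: indep_sets_def)
  then have "A i \<subseteq> Pow (space M)" "B i \<subseteq> Pow (space M)" for i
    using AB_G by blast+
  ultimately show ?thesis
    using A(2) B(2) by (simp add: sigma_sets_Inter_choices)
qed

section \<open>Processes with independent increments on the half-line\<close>

lemma strict_chain_through_finite_set:
  fixes R :: "'a::linorder set"
  assumes "finite R" "R \<subseteq> {lo..hi}" "lo \<le> hi"
  obtains v n where "v 0 = lo" "v n = hi" "\<And>j. j < n \<Longrightarrow> v j < v (Suc j)"
    "\<And>j. j \<le> n \<Longrightarrow> v j \<in> {lo..hi}" "R \<subseteq> v ` {..n}"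
proof -
  define L where "L = sorted_list_of_set (insert lo (insert hi R))"
  define n where "n = length L - 1"
  have set_L: "set L = insert lo (insert hi R)"
    unfolding L_def using assms(1) by (intro set_sorted_list_of_set) simp
  have sorted_L: "sorted L" "sorted_wrt (<) L"
    unfolding L_def by (rule sorted_sorted_list_of_set strict_sorted_list_of_set)+
  have len_L: "length L = Suc n"
    using set_L by (cases L) (auto simp: n_def)
  have in_L: "\<exists>j\<le>n. L ! j = x" if "x \<in> insert lo (insert hi R)" for x
    using that set_L len_L by (metis in_set_conv_nth less_Suc_eq_le)
  have L_range: "L ! j \<in> {lo..hi}" if "j \<le> n" for j
    using nth_mem[of j L] that len_L set_L assms(2,3) by auto
  have L_mono: "L ! i \<le> L ! j" if "i \<le> j" "j \<le> n" for i j
    using that len_L by (intro sorted_nth_mono[OF sorted_L(1)]) auto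
  show ?thesis
  proof
    obtain j where "j \<le> n" "L ! j = lo"
      using in_L by blast
    then show "L ! 0 = lo"
      using L_mono[of 0 j] L_range[of 0] by simp
    obtain j where "j \<le> n" "L ! j = hi"
      using in_L by blast
    then show "L ! n = hi"
      using L_mono[of j n] L_range[of n] by simp
    show "L ! j < L ! Suc j" if "j < n" for j
      using that len_L by (intro sorted_wrt_nth_less[OF sorted_L(2)]) auto
    show "L ! j \<in> {lo..hi}" if "j \<le> n" for j
      using that by (rule L_range)
    show "R \<subseteq> (\<lambda>j. L ! j) ` {..n}"
      using in_L by blast
  qed
qed

lemma (in prob_space) indep_finite_past_increment:
  fixes Z :: "real \<Rightarrow> 'a \<Rightarrow> nat"
  assumes Z_zero: "\<And>\<omega>. \<omega> \<in> space M \<Longrightarrow> Z 0 \<omega> = 0"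
    and Z_mono: "\<And>\<omega> r r'. \<omega> \<in> space M \<Longrightarrow> 0 \<le> r \<Longrightarrow> r \<le> r' \<Longrightarrow> Z r \<omega> \<le> Z r' \<omega>"
    and Z_incr: "\<And>m c. c 0 = 0 \<Longrightarrow> (\<forall>k<m. c k < c (Suc k)) \<Longrightarrow>
        indep_vars (\<lambda>_. count_space UNIV) (\<lambda>k \<omega>. Z (c (Suc k)) \<omega> - Z (c k) \<omega>) {..<m}"
    and R: "finite R" "R \<subseteq> {0..a}" and ab: "0 \<le> a" "a < b"
  shows "indep_set (sigma_sets (space M) (\<Union>r\<in>R. {Z r -` C \<inter> space M | C. True}))
    {(\<lambda>\<omega>. Z b \<omega> - Z a \<omega>) -` B \<inter> space M | B. True}"
proof -
  obtain n v where v: "v 0 = 0" "v n = a" "\<And>j. j < n \<Longrightarrow> v j < v (Suc j)"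
    "\<And>j. j \<le> n \<Longrightarrow> v j \<in> {0..a}" "R \<subseteq> v ` {..n}"
    by (rule strict_chain_through_finite_set[OF R ab(1)]) auto
  define w where "w k = (if k \<le> n then v k else b)" for k
  define \<Delta> where "\<Delta> k \<omega> = Z (w (Suc k)) \<omega> - Z (w k) \<omega>" for k \<omega>
  define E where "E k = {\<Delta> k -` B \<inter> space M | B. True}" for k
  have "w 0 = 0" "\<forall>k<Suc n. w k < w (Suc k)"
    using v ab by (auto simp: w_def less_Suc_eq)
  from Z_incr[OF this] have "indep_sets E ({..<n} \<union> {n})"
    by (simp add: indep_vars_def2 E_def[abs_def] \<Delta>_def[abs_def] lessThan_Suc)
  then have indep: "indep_set (sigma_sets (space M) (\<Union>k\<in>{..<n}. E k)) (sigma_sets (space M) (\<Union>k\<in>{n}. E k))"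
    by (rule indep_set_collect_two) (simp, unfold E_def, rule Int_stable_vimage)
  have Z_v: "Z (v j) \<omega> = (\<Sum>k<j. \<Delta> k \<omega>)" if "\<omega> \<in> space M" "j \<le> n" for j \<omega>
    using that(2)
  proof (induction j)
    case 0
    then show ?case using v(1) Z_zero[OF that(1)] by simp
  next
    case (Suc j)
    have "Z (v j) \<omega> \<le> Z (v (Suc j)) \<omega>"
      using Suc.prems v(3,4)[of j] by (intro Z_mono[OF that(1)]) auto
    then show ?case using Suc by (simp add: \<Delta>_def w_def)
  qed
  have past: "(\<Union>r\<in>R. {Z r -` C \<inter> space M | C. True}) \<subseteq> sigma_sets (space M) (\<Union>k\<in>{..<n}. E k)"
  proof safe
    fix r C assume "r \<in> R"
    then obtain j where j: "j \<le> n" "r = v j"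
      using v(5) by blast
    have "Z r -` C \<inter> space M \<in> sigma_sets (space M) (\<Union>k\<in>{..<j}. E k)"
      unfolding E_def using j by (intro vimage_sum_in_sigma_sets) (auto simp: Z_v)
    also have "\<dots> \<subseteq> sigma_sets (space M) (\<Union>k\<in>{..<n}. E k)"
      using j(1) by (intro sigma_sets_subseteq UN_mono) auto
    finally show "Z r -` C \<inter> space M \<in> sigma_sets (space M) (\<Union>k\<in>{..<n}. E k)" .
  qed
  have "\<Delta> n = (\<lambda>\<omega>. Z b \<omega> - Z a \<omega>)"
    using v(2) by (simp add: \<Delta>_def[abs_def] w_def)
  then have increment: "{(\<lambda>\<omega>. Z b \<omega> - Z a \<omega>) -` B \<inter> space M | B. True} \<subseteq> sigma_sets (space M) (\<Union>k\<in>{n}. E k)"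
    by (auto simp: E_def)
  show ?thesis
    by (rule indep_set_mono[OF indep sigma_sets_mono[OF past] increment])
qed

lemma (in prob_space) indep_past_increment:
  fixes Z :: "real \<Rightarrow> 'a \<Rightarrow> nat"
  assumes Z_meas: "\<And>r. 0 \<le> r \<Longrightarrow> Z r \<in> measurable M (count_space UNIV)"
    and Z_zero: "\<And>\<omega>. \<omega> \<in> space M \<Longrightarrow> Z 0 \<omega> = 0"
    and Z_mono: "\<And>\<omega> r r'. \<omega> \<in> space M \<Longrightarrow> 0 \<le> r \<Longrightarrow> r \<le> r' \<Longrightarrow> Z r \<omega> \<le> Z r' \<omega>"
    and Z_incr: "\<And>m c. c 0 = 0 \<Longrightarrow> (\<forall>k<m. c k < c (Suc k)) \<Longrightarrow>
        indep_vars (\<lambda>_. count_space UNIV) (\<lambda>k \<omega>. Z (c (Suc k)) \<omega> - Z (c k) \<omega>) {..<m}"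
    and ab: "0 \<le> a" "a \<le> b"
  shows "indep_set (sigma_sets (space M) (\<Union>r\<in>{0..a}. {Z r -` C \<inter> space M | C. True}))
    {(\<lambda>\<omega>. Z b \<omega> - Z a \<omega>) -` B \<inter> space M | B. True}"
proof (cases "a = b")
  case True
  let ?past = "sigma_sets (space M) (\<Union>r\<in>{0..a}. {Z r -` C \<inter> space M | C. True})"
  have past: "?past \<subseteq> events"
    using measurable_sets[OF Z_meas] by (intro sets.sigma_sets_subset) auto
  have increment: "(\<lambda>\<omega>. Z b \<omega> - Z a \<omega>) -` B \<inter> space M = (if 0 \<in> B then space M else {})" for B
    using True by auto
  show ?thesis
  proof (rule indep_setI[OF past])
    fix x y assume "x \<in> ?past" "y \<in> {(\<lambda>\<omega>. Z b \<omega> - Z a \<omega>) -` B \<inter> space M | B. True}"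
    moreover obtain B where "y = (\<lambda>\<omega>. Z b \<omega> - Z a \<omega>) -` B \<inter> space M"
      using \<open>y \<in> _\<close> by blast
    ultimately have "x \<subseteq> space M" "y = space M \<or> y = {}"
      using past sets.sets_into_space by (blast, simp add: increment)
    then show "prob (x \<inter> y) = prob x * prob y"
      by (auto simp: Int_absorb2 prob_space)
  qed (auto simp: increment)
next
  case False
  show ?thesis
  proof (rule indep_set_sigma_UN_if_finite)
    fix R assume "finite R" "R \<subseteq> {0..a}"
    then show "indep_set (sigma_sets (space M) (\<Union>r\<in>R. {Z r -` C \<inter> space M | C. True}))
        {(\<lambda>\<omega>. Z b \<omega> - Z a \<omega>) -` B \<inter> space M | B. True}"
      using False ab by (intro indep_finite_past_increment[where Z=Z, OF Z_zero Z_mono Z_incr]) auto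
  qed (blast, rule Int_stable_vimage)
qed

section \<open>Sums of counting processes\<close>

lemma dotp_diff: "dotp L t - dotp L s = dotp L (t - s)"
  by (simp add: dotp_def sum_subtractf[symmetric] algebra_simps)

locale counting_family = prob_space M for M :: "'a measure" +
  fixes N :: "'d::finite \<Rightarrow> real \<Rightarrow> 'a \<Rightarrow> nat" and \<Lambda> :: "'d \<Rightarrow> real"
  assumes N_measurable: "\<And>i s. 0 \<le> s \<Longrightarrow> N i s \<in> measurable M (count_space UNIV)"
    and counting: "\<And>i. simple_counting_process M (N i)"
begin

definition total_count :: "('d \<Rightarrow> real) \<Rightarrow> 'a \<Rightarrow> nat" where
  "total_count t \<omega> = (\<Sum>i\<in>UNIV. N i (t i) \<omega>)"

definition increment :: "('d \<Rightarrow> real) \<Rightarrow> ('d \<Rightarrow> real) \<Rightarrow> 'a \<Rightarrow> nat" where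
  "increment s t \<omega> = total_count t \<omega> - total_count s \<omega>"

definition exp_process :: "real \<Rightarrow> ('d \<Rightarrow> real) \<Rightarrow> 'a \<Rightarrow> real" where
  "exp_process u t \<omega> = exp ((\<Sum>i\<in>UNIV. real (N i (t i) \<omega>)) * ln u - dotp \<Lambda> t * (u - 1))"

abbreviation F :: "('d \<Rightarrow> real) \<Rightarrow> 'a measure" where
  "F \<equiv> mp_filtration M N"

definition poisson_increment :: "('d \<Rightarrow> real) \<Rightarrow> ('d \<Rightarrow> real) \<Rightarrow> bool" where
  "poisson_increment s t \<longleftrightarrow> (\<forall>A\<in>sets (F s). \<forall>k.
     prob (A \<inter> increment s t -` {k}) = prob A * poisson_density (dotp \<Lambda> t - dotp \<Lambda> s) k)"

lemma N_zero: "\<omega> \<in> space M \<Longrightarrow> N i 0 \<omega> = 0"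
  using counting[of i] unfolding simple_counting_process_def by blast

lemma N_mono: "\<omega> \<in> space M \<Longrightarrow> 0 \<le> r \<Longrightarrow> r \<le> r' \<Longrightarrow> N i r \<omega> \<le> N i r' \<omega>"
  using counting[of i] unfolding simple_counting_process_def by blast

lemma total_count_zero: "\<omega> \<in> space M \<Longrightarrow> total_count 0 \<omega> = 0"
  by (simp add: total_count_def N_zero)

lemma total_count_mono: "\<omega> \<in> space M \<Longrightarrow> 0 \<le> s \<Longrightarrow> s \<le> t \<Longrightarrow> total_count s \<omega> \<le> total_count t \<omega>"
  unfolding total_count_def by (intro sum_mono N_mono) (auto simp: le_fun_def)

lemma total_count_add_increment:
  "\<omega> \<in> space M \<Longrightarrow> 0 \<le> s \<Longrightarrow> s \<le> t \<Longrightarrow> total_count t \<omega> = total_count s \<omega> + increment s t \<omega>"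
  using total_count_mono by (simp add: increment_def)

lemma total_count_axis:
  assumes "\<omega> \<in> space M"
  shows "total_count (\<lambda>j. if j = i then r else 0) \<omega> = N i r \<omega>"
proof -
  have "total_count (\<lambda>j. if j = i then r else 0) \<omega> = (\<Sum>j\<in>UNIV. if j = i then N i r \<omega> else 0)"
    unfolding total_count_def by (intro sum.cong) (auto simp: N_zero[OF assms])
  then show ?thesis by simp
qed

lemma sets_F: "sets (F t) = sigma_sets (space M) (\<Union>i. {N i r -` C \<inter> space M | r C. 0 \<le> r \<and> r \<le> t i})"
  unfolding mp_filtration_def by (intro sets_measure_of) auto

lemma space_F [simp]: "space (F t) = space M"
  unfolding mp_filtration_def by (intro space_measure_of) auto

lemma sets_F_subset: "sets (F t) \<subseteq> events"
proof -
  have "(\<Union>i. {N i r -` C \<inter> space M | r C. 0 \<le> r \<and> r \<le> t i}) \<subseteq> events"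
    using N_measurable by (auto intro!: measurable_sets)
  then show ?thesis
    unfolding sets_F by (rule sets.sigma_sets_subset)
qed

lemma F_mono: "s \<le> t \<Longrightarrow> sets (F s) \<subseteq> sets (F t)"
  unfolding sets_F by (rule sigma_sets_subseteq) (force simp: le_fun_def intro: order_trans)

lemma sigma_finite_subalgebra_F: "sigma_finite_subalgebra M (F t)"
  by (intro finite_measure_subalgebra_is_sigma_finite)
    (simp add: finite_measure_subalgebra_def finite_measure_subalgebra_axioms_def subalgebra_def
      sets_F_subset finite_measure_axioms)

lemma measurable_from_F: "f \<in> measurable (F t) K \<Longrightarrow> f \<in> measurable M K"
  using measurable_from_subalg[of M "F t"] sets_F_subset by (simp add: subalgebra_def)

lemma N_measurable_F:
  assumes "0 \<le> r" "r \<le> t i"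
  shows "N i r \<in> measurable (F t) (count_space UNIV)"
  unfolding measurable_count_space_eq2_countable
proof (intro conjI ballI)
  fix k :: nat
  show "N i r -` {k} \<inter> space (F t) \<in> sets (F t)"
    unfolding sets_F space_F using assms by (intro sigma_sets.Basic) blast
qed simp

lemma total_count_measurable_F:
  "0 \<le> s \<Longrightarrow> s \<le> t \<Longrightarrow> total_count s \<in> measurable (F t) (count_space UNIV)"
  unfolding total_count_def[abs_def]
  by (intro measurable_count_space_sum N_measurable_F) (auto simp: le_fun_def)

lemma increment_measurable_F:
  assumes "0 \<le> s" "s \<le> t"
  shows "increment s t \<in> measurable (F t) (count_space UNIV)"
  unfolding increment_def[abs_def] using assms order_trans[OF assms]
  by (intro measurable_count_space_combine[where h="(-)"] total_count_measurable_F) simp_all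

lemma increment_measurable: "0 \<le> s \<Longrightarrow> s \<le> t \<Longrightarrow> increment s t \<in> measurable M (count_space UNIV)"
  by (rule measurable_from_F[OF increment_measurable_F])

lemma total_count_measurable: "0 \<le> t \<Longrightarrow> total_count t \<in> measurable M (count_space UNIV)"
  by (rule measurable_from_F[OF total_count_measurable_F[OF _ order_refl]])

lemma exp_process_eq:
  assumes "0 < u"
  shows "exp_process u t \<omega> = u ^ total_count t \<omega> * exp (- (dotp \<Lambda> t * (u - 1)))"
proof -
  have "(\<Sum>i\<in>UNIV. real (N i (t i) \<omega>)) = real (total_count t \<omega>)"
    by (simp add: total_count_def)
  then show ?thesis
    using assms by (simp add: exp_process_def exp_diff exp_of_nat_mult exp_minus divide_inverse)
qed

lemma exp_process_increment:
  assumes "\<omega> \<in> space M" "0 \<le> s" "s \<le> t" "0 < u"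
  shows "exp_process u t \<omega> =
    exp_process u s \<omega> * u ^ increment s t \<omega> * exp (- ((dotp \<Lambda> t - dotp \<Lambda> s) * (u - 1)))"
  using total_count_add_increment[OF assms(1-3)] assms(4)
  by (simp add: exp_process_eq power_add mult_exp_exp algebra_simps)

lemma exp_process_measurable_F:
  assumes "0 \<le> t" "0 < u"
  shows "exp_process u t \<in> borel_measurable (F t)"
proof -
  have "exp_process u t = (\<lambda>\<omega>. u ^ total_count t \<omega> * exp (- (dotp \<Lambda> t * (u - 1))))"
    using assms(2) by (simp add: exp_process_eq fun_eq_iff)
  also have "\<dots> \<in> borel_measurable (F t)"
    by (rule measurable_compose[OF total_count_measurable_F[OF assms(1) order_refl]]) simp
  finally show ?thesis .
qed

lemma exp_process_integrable:
  assumes "0 \<le> t" "0 < u" "u \<le> 1"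
  shows "integrable M (exp_process u t)"
proof (rule integrable_const_bound)
  show "AE \<omega> in M. norm (exp_process u t \<omega>) \<le> exp (- (dotp \<Lambda> t * (u - 1)))"
    using assms(2,3) by (simp add: exp_process_eq abs_mult power_le_one)
  show "exp_process u t \<in> borel_measurable M"
    using measurable_from_F[OF exp_process_measurable_F[OF assms(1,2)]] .
qed

lemma poisson_increment_distribution:
  assumes "poisson_increment s t"
  shows "prob (increment s t -` {k} \<inter> space M) = poisson_density (dotp \<Lambda> t - dotp \<Lambda> s) k"
proof -
  have "prob (space M \<inter> increment s t -` {k}) = prob (space M) * poisson_density (dotp \<Lambda> t - dotp \<Lambda> s) k"
    using assms sets.top[of "F s"] unfolding poisson_increment_def by simp
  then show ?thesis
    by (simp add: Int_commute prob_space)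
qed

lemma poisson_increment_indep:
  assumes st: "0 \<le> s" "s \<le> t" and Q: "poisson_increment s t"
  shows "indep_set (sets (F s)) (sigma_sets (space M) {increment s t -` B \<inter> space M | B. True})"
proof -
  have "indep_set (sigma_sets (space M) (sets (F s)))
      (sigma_sets (space M) {increment s t -` B \<inter> space M | B. True})"
  proof (rule indep_set_sigma_vimage_nat)
    show "sets (F s) \<subseteq> events" "Int_stable (sets (F s))"
      by (rule sets_F_subset) (auto intro: Int_stableI)
    show "increment s t \<in> measurable M (count_space UNIV)"
      using st by (rule increment_measurable)
    show "prob (A \<inter> increment s t -` {k}) = prob A * prob (increment s t -` {k} \<inter> space M)"
      if "A \<in> sets (F s)" for A k
      using Q that by (simp add: poisson_increment_distribution poisson_increment_def)
  qed
  then show ?thesis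
    using sets.sigma_sets_eq[of "F s"] by simp
qed

lemma martingale_step_if_poisson_increment:
  assumes st: "0 \<le> s" "s \<le> t" and Q: "poisson_increment s t" and u: "0 < u" "u \<le> 1"
  shows "AE \<omega> in M. real_cond_exp M (F s) (exp_process u t) \<omega> = exp_process u s \<omega>"
proof -
  interpret sigma_finite_subalgebra M "F s"
    by (rule sigma_finite_subalgebra_F)
  define c where "c = exp (- ((dotp \<Lambda> t - dotp \<Lambda> s) * (u - 1)))"
  have D: "increment s t \<in> measurable M (count_space UNIV)"
    using st by (rule increment_measurable)
  have "(\<lambda>x. u ^ increment s t x) \<in> borel_measurable M"
    by (rule measurable_compose[OF D]) simp
  then have power_integrable: "integrable M (\<lambda>x. u ^ increment s t x)"
    using u by (intro integrable_const_bound[where B=1]) (auto simp: power_le_one)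
  have power_integral: "(\<integral>x. u ^ increment s t x \<partial>M) * c = 1"
    using D poisson_increment_distribution[OF Q] u
    by (subst integral_power_poisson) (auto simp: c_def mult_exp_exp)
  show ?thesis
  proof (rule real_cond_exp_charact)
    fix A assume A: "A \<in> sets (F s)"
    have A_M: "A \<in> events"
      using A sets_F_subset by blast
    let ?g = "\<lambda>x. indicator A x * exp_process u s x"
    have "(\<integral>x\<in>A. exp_process u t x \<partial>M) = (\<integral>x. ?g x * u ^ increment s t x * c \<partial>M)"
      unfolding set_lebesgue_integral_def using sets.sets_into_space[OF A_M]
      by (intro Bochner_Integration.integral_cong)
        (auto simp: c_def exp_process_increment[OF _ st u(1)] split: split_indicator)
    also have "\<dots> = (\<integral>x. ?g x * u ^ increment s t x \<partial>M) * c"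
      by simp
    also have "(\<integral>x. ?g x * u ^ increment s t x \<partial>M) = (\<integral>x. ?g x \<partial>M) * (\<integral>x. u ^ increment s t x \<partial>M)"
    proof (rule integral_mult_indep_vimage[OF poisson_increment_indep[OF st Q] space_F])
      show "?g \<in> borel_measurable (F s)"
        using A st u by (intro borel_measurable_times borel_measurable_indicator exp_process_measurable_F) auto
      show "integrable M ?g"
        using integrable_mult_indicator[OF A_M exp_process_integrable[OF st(1) u]] by simp
    qed (rule power_integrable)
    finally show "(\<integral>x\<in>A. exp_process u t x \<partial>M) = (\<integral>x\<in>A. exp_process u s x \<partial>M)"
      using power_integral by (simp add: set_lebesgue_integral_def mult.assoc)
  qed (use st u order_trans[OF st] in \<open>simp_all add: exp_process_integrable exp_process_measurable_F\<close>)
qed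

lemma power_integral_if_martingale:
  assumes st: "0 \<le> s" "s \<le> t" and u: "0 < u" "u \<le> 1"
    and mart: "AE \<omega> in M. real_cond_exp M (F s) (exp_process u t) \<omega> = exp_process u s \<omega>"
    and B: "B \<in> sets (F s)" and level: "\<And>\<omega>. \<omega> \<in> B \<Longrightarrow> total_count s \<omega> = j"
  shows "(\<integral>x. indicator B x * u ^ increment s t x \<partial>M) = exp ((dotp \<Lambda> t - dotp \<Lambda> s) * (u - 1)) * prob B"
proof -
  interpret sigma_finite_subalgebra M "F s"
    by (rule sigma_finite_subalgebra_F)
  have B_M: "B \<in> events"
    using B sets_F_subset by blast
  define c where "c = exp (- ((dotp \<Lambda> t - dotp \<Lambda> s) * (u - 1)))"
  define e where "e = u ^ j * exp (- (dotp \<Lambda> s * (u - 1)))"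
  have e_B: "exp_process u s \<omega> = e" if "\<omega> \<in> B" for \<omega>
    using u(1) level[OF that] by (simp add: e_def exp_process_eq)
  have "(\<integral>x\<in>B. exp_process u t x \<partial>M) = (\<integral>x\<in>B. exp_process u s x \<partial>M)"
    using order_trans[OF st] st(1) u mart B
    by (intro set_integral_eq_if_real_cond_exp_eq exp_process_integrable
        measurable_from_F[OF exp_process_measurable_F])
  also have "\<dots> = e * prob B"
    unfolding set_lebesgue_integral_def using B_M
    by (subst Bochner_Integration.integral_cong[OF refl, where g="\<lambda>x. e * indicator B x"])
      (auto simp: e_B split: split_indicator)
  finally have "(\<integral>x\<in>B. exp_process u t x \<partial>M) = e * prob B" .
  moreover have "(\<integral>x\<in>B. exp_process u t x \<partial>M) = e * c * (\<integral>x. indicator B x * u ^ increment s t x \<partial>M)"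
    unfolding set_lebesgue_integral_def using sets.sets_into_space[OF B_M]
    by (subst Bochner_Integration.integral_cong[OF refl,
          where g="\<lambda>x. e * c * (indicator B x * u ^ increment s t x)"])
      (auto simp: c_def e_B exp_process_increment[OF _ st u(1)] split: split_indicator)
  moreover have "e > 0"
    using u(1) by (simp add: e_def)
  ultimately have "c * (\<integral>x. indicator B x * u ^ increment s t x \<partial>M) = prob B"
    by (simp add: mult.assoc)
  moreover have "exp ((dotp \<Lambda> t - dotp \<Lambda> s) * (u - 1)) * c = 1"
    by (simp add: c_def mult_exp_exp)
  ultimately show ?thesis
    by (metis mult.assoc mult_1)
qed

lemma fibre_poisson_if_martingale:
  assumes st: "0 \<le> s" "s \<le> t"
    and mart: "\<And>u. 0 < u \<Longrightarrow> u \<le> 1 \<Longrightarrow>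
      AE \<omega> in M. real_cond_exp M (F s) (exp_process u t) \<omega> = exp_process u s \<omega>"
    and B: "B \<in> sets (F s)" and level: "\<And>\<omega>. \<omega> \<in> B \<Longrightarrow> total_count s \<omega> = j"
  shows "prob (B \<inter> increment s t -` {k}) = prob B * poisson_density (dotp \<Lambda> t - dotp \<Lambda> s) k"
proof -
  define a where "a = dotp \<Lambda> t - dotp \<Lambda> s"
  have B_M: "B \<in> events"
    using B sets_F_subset by blast
  have D: "increment s t \<in> measurable M (count_space UNIV)"
    using st by (rule increment_measurable)
  have "(\<lambda>k. prob (B \<inter> increment s t -` {k})) = (\<lambda>k. prob B * poisson_density a k)"
  proof (rule powser_coeffs_unique)
    fix x :: real assume x: "\<bar>x\<bar> < 1"
    show "summable (\<lambda>k. prob (B \<inter> increment s t -` {k}) * x ^ k)"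
    proof (rule summable_comparison_test[OF _ summable_geometric[of "\<bar>x\<bar>"]])
      show "\<exists>N. \<forall>k\<ge>N. norm (prob (B \<inter> increment s t -` {k}) * x ^ k) \<le> \<bar>x\<bar> ^ k"
        by (auto simp: abs_mult power_abs intro!: mult_left_le_one_le)
    qed (use x in simp)
    show "summable (\<lambda>k. prob B * poisson_density a k * x ^ k)"
      using sums_summable[OF poisson_density_powser_sums] summable_mult by (simp add: mult.assoc)
  next
    fix x :: real assume x: "0 < x" "x < 1"
    have "(\<lambda>k. prob (B \<inter> increment s t -` {k}) * x ^ k) sums (exp (a * (x - 1)) * prob B)"
      using indicator_power_integral_sums[OF D B_M, of x] x
        power_integral_if_martingale[OF st _ _ mart B level, of x]
      by (simp add: a_def)
    moreover have "(\<lambda>k. prob B * poisson_density a k * x ^ k) sums (prob B * exp (a * (x - 1)))"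
      using sums_mult[OF poisson_density_powser_sums] by (simp add: mult.assoc)
    ultimately show "(\<Sum>k. prob (B \<inter> increment s t -` {k}) * x ^ k) = (\<Sum>k. prob B * poisson_density a k * x ^ k)"
      by (simp add: sums_iff mult.commute)
  qed
  then show ?thesis
    by (simp add: fun_eq_iff a_def)
qed

lemma poisson_increment_if_martingale:
  assumes st: "0 \<le> s" "s \<le> t"
    and mart: "\<And>u. 0 < u \<Longrightarrow> u \<le> 1 \<Longrightarrow>
      AE \<omega> in M. real_cond_exp M (F s) (exp_process u t) \<omega> = exp_process u s \<omega>"
  shows "poisson_increment s t"
  unfolding poisson_increment_def
proof (intro ballI allI)
  fix A k assume A: "A \<in> sets (F s)"
  let ?p = "poisson_density (dotp \<Lambda> t - dotp \<Lambda> s) k"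
  have A_M: "A \<in> events"
    using A sets_F_subset by blast
  have level: "A \<inter> total_count s -` {j} \<in> sets (F s)" for j
  proof -
    have "A \<inter> total_count s -` {j} = A \<inter> (total_count s -` {j} \<inter> space (F s))"
      using sets.sets_into_space[OF A] by auto
    then show ?thesis
      using A measurable_sets[OF total_count_measurable_F[OF st(1) order_refl], of "{j}"] by auto
  qed
  have "prob (A \<inter> (increment s t -` {k} \<inter> space M)) = prob A * ?p"
  proof (rule prob_Int_eq_mult_by_fibres[OF total_count_measurable[OF st(1)] A_M])
    show "increment s t -` {k} \<inter> space M \<in> events"
      using measurable_sets[OF increment_measurable[OF st]] by simp
    fix j
    have "A \<inter> total_count s -` {j} \<inter> (increment s t -` {k} \<inter> space M)
        = A \<inter> total_count s -` {j} \<inter> increment s t -` {k}"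
      using sets.sets_into_space[OF A_M] by blast
    then show "prob (A \<inter> total_count s -` {j} \<inter> (increment s t -` {k} \<inter> space M))
        = prob (A \<inter> total_count s -` {j}) * ?p"
      using fibre_poisson_if_martingale[OF st mart level] by simp
  qed
  moreover have "A \<inter> (increment s t -` {k} \<inter> space M) = A \<inter> increment s t -` {k}"
    using sets.sets_into_space[OF A_M] by blast
  ultimately show "prob (A \<inter> increment s t -` {k}) = prob A * ?p"
    by simp
qed

lemma total_count_distribution:
  assumes "0 \<le> t" "poisson_increment 0 t"
  shows "prob (total_count t -` {k} \<inter> space M) = poisson_density (dotp \<Lambda> t) k"
proof -
  have "increment 0 t -` {k} \<inter> space M = total_count t -` {k} \<inter> space M"
    by (auto simp: increment_def total_count_zero)
  moreover have "dotp \<Lambda> t - dotp \<Lambda> 0 = dotp \<Lambda> t"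
    by (simp add: dotp_def)
  ultimately show ?thesis
    using poisson_increment_distribution[OF assms(2), of k] by simp
qed

lemma chain_increments_indep_if_poisson_increments:
  assumes Q: "\<And>s t. 0 \<le> s \<Longrightarrow> s \<le> t \<Longrightarrow> poisson_increment s t"
    and c: "c 0 = 0" "\<forall>k<m. c k < c (Suc k)"
  shows "indep_vars (\<lambda>_. count_space UNIV) (\<lambda>k. increment (c k) (c (Suc k))) {..<m}"
proof (rule indep_vars_if_indep_of_past[where G="\<lambda>k. F (c k)"])
  have c_le: "c k \<le> c (Suc k)" if "k < m" for k
    using c that by (simp add: less_imp_le)
  have c_nonneg: "0 \<le> c k" if "k \<le> m" for k
    using that
  proof (induction k)
    case (Suc k)
    then show ?case using c_le[of k] by (auto intro: order_trans)
  qed (use c in simp)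
  fix k assume k: "k < m"
  show "sets (F (c k)) \<subseteq> sets (F (c (Suc k)))"
    using c_le[OF k] by (rule F_mono)
  show "increment (c k) (c (Suc k)) \<in> measurable (F (c (Suc k))) (count_space UNIV)"
    using c_nonneg[of k] c_le[OF k] k by (intro increment_measurable_F) auto
  have "indep_set (sets (F (c k)))
      (sigma_sets (space M) {increment (c k) (c (Suc k)) -` B \<inter> space M | B. True})"
    using c_nonneg[of k] c_le[OF k] k by (intro poisson_increment_indep Q) auto
  then show "indep_set (sets (F (c k)))
      {increment (c k) (c (Suc k)) -` B \<inter> space M | B. B \<in> sets (count_space UNIV)}"
    by (rule indep_set_mono) auto
qed simp

lemma poisson_process_if_poisson_increments:
  assumes Q: "\<And>s t. 0 \<le> s \<Longrightarrow> s \<le> t \<Longrightarrow> poisson_increment s t"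
  shows "mp_poisson_process M \<Lambda> total_count"
  unfolding mp_poisson_process_def
proof (intro conjI allI impI ballI)
  show "total_count t \<in> measurable M (count_space UNIV)" if "0 \<le> t" for t
    using that by (rule total_count_measurable)
  show "total_count 0 \<omega> = 0" if "\<omega> \<in> space M" for \<omega>
    using that by (rule total_count_zero)
  show "total_count s \<omega> \<le> total_count t \<omega>" if "\<omega> \<in> space M" "0 \<le> s \<and> s \<le> t" for \<omega> s t
    using that by (intro total_count_mono) auto
  show "indep_vars (\<lambda>_. count_space UNIV) (\<lambda>k \<omega>. total_count (c (Suc k)) \<omega> - total_count (c k) \<omega>) {..<m}"
    if "c 0 = 0 \<and> (\<forall>k<m. c k < c (Suc k))" for m c
    using chain_increments_indep_if_poisson_increments[OF Q] that
    by (simp add: increment_def[abs_def])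
next
  fix s t :: "'d \<Rightarrow> real" assume st: "0 \<le> s \<and> s \<le> t"
  then have ts: "0 \<le> t - s"
    by simp
  have increment: "(\<lambda>\<omega>. total_count t \<omega> - total_count s \<omega>) = increment s t"
    by (simp add: increment_def[abs_def])
  show "distr M (count_space UNIV) (\<lambda>\<omega>. total_count t \<omega> - total_count s \<omega>) =
      distr M (count_space UNIV) (total_count (t - s))"
  proof (rule measure_eqI_countable[of _ UNIV])
    fix k :: nat
    have "emeasure (distr M (count_space UNIV) (increment s t)) {k}
        = prob (increment s t -` {k} \<inter> space M)"
      using st increment_measurable by (simp add: emeasure_distr emeasure_eq_measure)
    also have "\<dots> = prob (total_count (t - s) -` {k} \<inter> space M)"
      using st ts by (simp add: poisson_increment_distribution Q total_count_distribution dotp_diff)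
    also have "\<dots> = emeasure (distr M (count_space UNIV) (total_count (t - s))) {k}"
      using ts total_count_measurable by (simp add: emeasure_distr emeasure_eq_measure)
    finally show "emeasure (distr M (count_space UNIV) (\<lambda>\<omega>. total_count t \<omega> - total_count s \<omega>)) {k}
        = emeasure (distr M (count_space UNIV) (total_count (t - s))) {k}"
      by (simp only: increment)
  qed auto
next
  fix t :: "'d \<Rightarrow> real" and k :: nat assume t: "0 \<le> t"
  have "{\<omega> \<in> space M. total_count t \<omega> = k} = total_count t -` {k} \<inter> space M"
    by auto
  then show "prob {\<omega> \<in> space M. total_count t \<omega> = k} = exp (- dotp \<Lambda> t) * dotp \<Lambda> t ^ k / fact k"
    using t by (simp add: total_count_distribution Q poisson_density_def)
qed

lemma axis_increments_indep:
  assumes P: "mp_poisson_process M \<Lambda> total_count"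
    and c: "c 0 = 0" "\<forall>k<m. c k < c (Suc k)"
  shows "indep_vars (\<lambda>_. count_space UNIV) (\<lambda>k \<omega>. N i (c (Suc k)) \<omega> - N i (c k) \<omega>) {..<m}"
proof -
  define e where "e k = (\<lambda>j. if j = i then c k else 0)" for k
  have "e 0 = 0"
    using c(1) by (simp add: e_def fun_eq_iff)
  moreover have "\<forall>k<m. e k < e (Suc k)"
    using c(2) by (auto simp: e_def less_fun_def le_fun_def)
  ultimately have "indep_vars (\<lambda>_. count_space UNIV)
      (\<lambda>k \<omega>. total_count (e (Suc k)) \<omega> - total_count (e k) \<omega>) {..<m}"
    using P unfolding mp_poisson_process_def by blast
  then show ?thesis
    by (subst (asm) indep_vars_cong_space) (auto simp: e_def total_count_axis)
qed

lemma increment_distribution_if_poisson_process: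
  assumes P: "mp_poisson_process M \<Lambda> total_count" and st: "0 \<le> s" "s \<le> t"
  shows "prob (increment s t -` {k} \<inter> space M) = poisson_density (dotp \<Lambda> t - dotp \<Lambda> s) k"
proof -
  have "prob (increment s t -` {k} \<inter> space M) = measure (distr M (count_space UNIV) (increment s t)) {k}"
    using st increment_measurable by (simp add: measure_distr)
  also have "distr M (count_space UNIV) (increment s t) = distr M (count_space UNIV) (total_count (t - s))"
    using P st unfolding mp_poisson_process_def increment_def[abs_def] by blast
  also have "measure \<dots> {k} = prob {\<omega> \<in> space M. total_count (t - s) \<omega> = k}"
    using st total_count_measurable[of "t - s"] by (simp add: measure_distr vimage_def Int_def conj_commute)
  also have "\<dots> = poisson_density (dotp \<Lambda> t - dotp \<Lambda> s) k"
    using P st unfolding mp_poisson_process_def by (simp add: poisson_density_def dotp_diff)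
  finally show ?thesis .
qed

lemma N_increment_in_proc_sigma:
  assumes "0 \<le> a" "0 \<le> b"
  shows "(\<lambda>\<omega>. N i b \<omega> - N i a \<omega>) -` B \<inter> space M \<in> proc_sigma M (N i) {0..}"
proof -
  let ?G = "{N i r -` C \<inter> space M | r C. r \<in> {0..}}"
  have "?G \<subseteq> Pow (space M)"
    by auto
  then have space: "space (sigma (space M) ?G) = space M" and sets: "sets (sigma (space M) ?G) = sigma_sets (space M) ?G"
    by (simp_all add: space_measure_of sets_measure_of)
  have "N i r \<in> measurable (sigma (space M) ?G) (count_space UNIV)" if "0 \<le> r" for r
    unfolding measurable_count_space_eq2_countable space sets using that
    by (auto intro!: sigma_sets.Basic)
  then have "(\<lambda>\<omega>. N i b \<omega> - N i a \<omega>) \<in> measurable (sigma (space M) ?G) (count_space UNIV)"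
    using assms by (intro measurable_count_space_combine[where h="(-)"])
  from measurable_sets[OF this, of B] show ?thesis
    unfolding proc_sigma_def by (simp only: space sets sets_count_space Pow_UNIV UNIV_I)
qed

lemma pasts_indep_increments_if_poisson_process:
  assumes indep: "indep_sets (\<lambda>i. proc_sigma M (N i) {0..}) UNIV"
    and P: "mp_poisson_process M \<Lambda> total_count" and st: "0 \<le> s" "s \<le> t"
  shows "indep_set
    (sigma_sets (space M) (\<Union>i. sigma_sets (space M) (\<Union>r\<in>{0..s i}. {N i r -` C \<inter> space M | C. True})))
    (sigma_sets (space M) (\<Union>i. {(\<lambda>\<omega>. N i (t i) \<omega> - N i (s i) \<omega>) -` B \<inter> space M | B. True}))"
proof (rule indep_set_sigma_UN_components[OF indep])
  fix i
  have si: "0 \<le> s i" "s i \<le> t i"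
    using st by (auto simp: le_fun_def)
  show "sigma_algebra (space M) (proc_sigma M (N i) {0..})"
    unfolding proc_sigma_def by (rule sigma_algebra_sigma_sets) auto
  show "sigma_sets (space M) (\<Union>r\<in>{0..s i}. {N i r -` C \<inter> space M | C. True}) \<subseteq> proc_sigma M (N i) {0..}"
    unfolding proc_sigma_def by (rule sigma_sets_subseteq) force
  show "{(\<lambda>\<omega>. N i (t i) \<omega> - N i (s i) \<omega>) -` B \<inter> space M | B. True} \<subseteq> proc_sigma M (N i) {0..}"
    using si by (auto intro: N_increment_in_proc_sigma)
  show "indep_set (sigma_sets (space M) (\<Union>r\<in>{0..s i}. {N i r -` C \<inter> space M | C. True}))
      {(\<lambda>\<omega>. N i (t i) \<omega> - N i (s i) \<omega>) -` B \<inter> space M | B. True}"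
    using si by (intro indep_past_increment N_measurable N_zero N_mono axis_increments_indep[OF P]) auto
  show "Int_stable (sigma_sets (space M) (\<Union>r\<in>{0..s i}. {N i r -` C \<inter> space M | C. True}))"
    "space M \<in> sigma_sets (space M) (\<Union>r\<in>{0..s i}. {N i r -` C \<inter> space M | C. True})"
    by (auto intro: Int_stable_sigma_sets sigma_sets_top)
  show "Int_stable {(\<lambda>\<omega>. N i (t i) \<omega> - N i (s i) \<omega>) -` B \<inter> space M | B. True}"
    by (rule Int_stable_vimage)
  show "space M \<in> {(\<lambda>\<omega>. N i (t i) \<omega> - N i (s i) \<omega>) -` B \<inter> space M | B. True}"
    by (intro CollectI exI[of _ UNIV]) simp
qed

lemma poisson_increment_if_poisson_process:
  assumes indep: "indep_sets (\<lambda>i. proc_sigma M (N i) {0..}) UNIV"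
    and P: "mp_poisson_process M \<Lambda> total_count" and st: "0 \<le> s" "s \<le> t"
  shows "poisson_increment s t"
proof -
  let ?past = "\<lambda>i. sigma_sets (space M) (\<Union>r\<in>{0..s i}. {N i r -` C \<inter> space M | C. True})"
  let ?future = "\<lambda>i. {(\<lambda>\<omega>. N i (t i) \<omega> - N i (s i) \<omega>) -` B \<inter> space M | B. True}"
  have "sets (F s) \<subseteq> sigma_sets (space M) (\<Union>i. ?past i)"
    unfolding sets_F
  proof (rule sigma_sets_mono, safe)
    fix i r C assume "0 \<le> r" "r \<le> s i"
    then have "N i r -` C \<inter> space M \<in> ?past i"
      by (intro sigma_sets.Basic UN_I[of r]) auto
    then show "N i r -` C \<inter> space M \<in> sigma_sets (space M) (\<Union>i. ?past i)"
      by (rule sigma_sets.Basic[OF UN_I[OF UNIV_I]])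
  qed
  moreover have "increment s t -` {k} \<inter> space M \<in> sigma_sets (space M) (\<Union>i. ?future i)" for k
  proof (rule vimage_sum_in_sigma_sets)
    show "increment s t \<omega> = (\<Sum>i\<in>UNIV. N i (t i) \<omega> - N i (s i) \<omega>)" if "\<omega> \<in> space M" for \<omega>
      unfolding increment_def total_count_def using that st
      by (intro sum_subtractf_nat[symmetric] N_mono) (auto simp: le_fun_def)
  qed simp
  ultimately have "prob (A \<inter> (increment s t -` {k} \<inter> space M))
      = prob A * prob (increment s t -` {k} \<inter> space M)" if "A \<in> sets (F s)" for A k
    using that pasts_indep_increments_if_poisson_process[OF indep P st] by (auto intro: indep_setD)
  moreover have "A \<inter> (increment s t -` {k} \<inter> space M) = A \<inter> increment s t -` {k}" if "A \<in> sets (F s)" for A k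
    using that sets_F_subset sets.sets_into_space by blast
  ultimately show ?thesis
    unfolding poisson_increment_def
    by (simp add: increment_distribution_if_poisson_process[OF P st])
qed

lemma exp_martingale_iff_poisson_increments:
  "(\<forall>u\<in>{0<..1}. mp_martingale M F (exp_process u)) \<longleftrightarrow>
    (\<forall>s t. 0 \<le> s \<longrightarrow> s \<le> t \<longrightarrow> poisson_increment s t)"
proof safe
  fix s t :: "'d \<Rightarrow> real" assume mart: "\<forall>u\<in>{0<..1}. mp_martingale M F (exp_process u)"
    and st: "0 \<le> s" "s \<le> t"
  show "poisson_increment s t"
    using mart st unfolding mp_martingale_def by (intro poisson_increment_if_martingale) auto
next
  fix u :: real assume Q: "\<forall>s t. 0 \<le> s \<longrightarrow> s \<le> t \<longrightarrow> poisson_increment s t" and u: "u \<in> {0<..1}"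
  then show "mp_martingale M F (exp_process u)"
    unfolding mp_martingale_def
    by (auto intro: exp_process_integrable exp_process_measurable_F martingale_step_if_poisson_increment)
qed

lemma poisson_process_iff_poisson_increments:
  assumes "indep_sets (\<lambda>i. proc_sigma M (N i) {0..}) UNIV"
  shows "mp_poisson_process M \<Lambda> total_count \<longleftrightarrow>
    (\<forall>s t. 0 \<le> s \<longrightarrow> s \<le> t \<longrightarrow> poisson_increment s t)"
  using poisson_increment_if_poisson_process[OF assms] poisson_process_if_poisson_increments
  by blast

end

theorem mainTheorem17:
  fixes M :: "'a measure"
    and N :: "'d::finite \<Rightarrow> real \<Rightarrow> 'a \<Rightarrow> nat"
    and \<Lambda> :: "'d \<Rightarrow> real"
  assumes "prob_space M"
    and meas: "\<And>i s. 0 \<le> s \<Longrightarrow> N i s \<in> measurable M (count_space UNIV)"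
    and counting: "\<And>i. simple_counting_process M (N i)"
    and indep: "prob_space.indep_sets M (\<lambda>i. proc_sigma M (N i) {0..}) UNIV"
    and pos: "\<And>i. \<Lambda> i > 0"
  shows "(\<forall>u\<in>{0<..1::real}. mp_martingale M (mp_filtration M N)
            (\<lambda>t \<omega>. exp ((\<Sum>i\<in>UNIV. real (N i (t i) \<omega>)) * ln u - dotp \<Lambda> t * (u - 1))))
         \<longleftrightarrow> mp_poisson_process M \<Lambda> (\<lambda>t \<omega>. \<Sum>i\<in>UNIV. N i (t i) \<omega>)"
proof -
  \<comment> \<open>The argument works for arbitrary rates.\<close>
  interpret counting_family M N \<Lambda>
    using assms(1) meas counting by (simp add: counting_family_def counting_family_axioms_def)
  have "(\<lambda>t \<omega>. exp ((\<Sum>i\<in>UNIV. real (N i (t i) \<omega>)) * ln u - dotp \<Lambda> t * (u - 1))) = exp_process u" for u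
    by (simp add: exp_process_def[abs_def])
  moreover have "(\<lambda>t \<omega>. \<Sum>i\<in>UNIV. N i (t i) \<omega>) = total_count"
    by (simp add: total_count_def[abs_def])
  ultimately show ?thesis
    using exp_martingale_iff_poisson_increments poisson_process_iff_poisson_increments[OF indep]
    by simp
qed

end
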